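(* Let $s,t\in\mathbb{R}$ with $s\ne0$, $t\ne0$, $s^2+4t>0$, and $q=\varphi'_{s,t}/\varphi_{s,t}$. (1) If $\lvert q\rvert<1$, then on the disk of convergence of its series, $\mathrm{Exp}_{s,t}(z)=\prod_{k=0}^\infty\frac{\varphi_{s,t}^{k+1}}{\varphi_{s,t}^{k+1}-(\varphi_{s,t}-\varphi'_{s,t})\varphi_{s,t}'^{\,k}z}$, and this product gives the meromorphic continuation of $\mathrm{Exp}_{s,t}$ to $\mathbb{C}$. (2) If $\lvert q\rvert>1$, then $\mathrm{Exp}_{s,t}(z)=\prod_{k=0}^\infty\Big(1-(\varphi_{s,t}-\varphi'_{s,t})\frac{\varphi_{s,t}^{k}}{\varphi_{s,t}'^{\,k+1}}z\Big)$.
   Context: $\varphi_{s,t}=\frac{s+\sqrt{s^2+4t}}{2}$, $\varphi'_{s,t}=\frac{s-\sqrt{s^2+4t}}{2}$. Generalized Fibonacci polynomials: $\{0\}_{s,t}=0$, $\{1\}_{s,t}=1$, $\{n+2\}_{s,t}=s\{n+1\}_{s,t}+t\{n\}_{s,t}$; Fibotorial $\{n\}_{s,t}!=\prod_{k=1}^n\{k\}_{s,t}$, $\{0\}_{s,t}!=1$. $\mathrm{Exp}_{s,t}(z)=\sum_{n=0}^\infty\varphi_{s,t}^{\binom n2}\frac{z^n}{\{n\}_{s,t}!}$. *)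

theory Defs
  imports "HOL-Complex_Analysis.Complex_Analysis"
begin

definition phi :: "real \<Rightarrow> real \<Rightarrow> real" where
  "phi s t = (s + sqrt (s\<^sup>2 + 4 * t)) / 2"

definition phi' :: "real \<Rightarrow> real \<Rightarrow> real" where
  "phi' s t = (s - sqrt (s\<^sup>2 + 4 * t)) / 2"

fun gfib :: "real \<Rightarrow> real \<Rightarrow> nat \<Rightarrow> real" where
  "gfib s t 0 = 0"
| "gfib s t (Suc 0) = 1"
| "gfib s t (Suc (Suc n)) = s * gfib s t (Suc n) + t * gfib s t n"

definition fibotorial :: "real \<Rightarrow> real \<Rightarrow> nat \<Rightarrow> real" where
  "fibotorial s t n = (\<Prod>k = 1..n. gfib s t k)"

definition Exp_coeff :: "real \<Rightarrow> real \<Rightarrow> nat \<Rightarrow> complex" where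
  "Exp_coeff s t n = complex_of_real (phi s t ^ (n choose 2) / fibotorial s t n)"

definition Exp_st :: "real \<Rightarrow> real \<Rightarrow> complex \<Rightarrow> complex" where
  "Exp_st s t z = (\<Sum>n. Exp_coeff s t n * z ^ n)"

end

theory Submission
  imports Defs
begin

text \<open>
  By Binet's formula {n} = (\<phi>^n - \<phi>'^n) / (\<phi> - \<phi>'), the coefficients of
  Exp_{s,t} are those of a Jackson q-exponential: with q = \<phi>'/\<phi> one has
  Exp_{s,t}(z) = e_q(\<alpha> z), \<alpha> = (\<phi> - \<phi>')/\<phi>, and with p = \<phi>/\<phi>' one has
  Exp_{s,t}(z) = E_p(\<beta> z), \<beta> = (\<phi>' - \<phi>)/\<phi>'.  The coefficient recurrences give the
  q-difference equations e_q(\<alpha> q z) = (1 - \<alpha> z) e_q(\<alpha> z) and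
  E_p(\<beta> z) = (1 + \<beta> z) E_p(\<beta> p z).  Whichever of q, p lies in the unit disc,
  iterating along the orbit q^k z resp. p^k z, which tends to 0 where the series is continuous
  with value 1, yields the corresponding product.  Near any point z0, the product for e_q is a finite product of
  rational factors times e_q(\<alpha> q^N z) with q^N z0 inside the disc of convergence,
  which gives the meromorphic continuation.
\<close>

section \<open>q-exponential series\<close>

definition q_pochhammer :: "'a::comm_ring_1 \<Rightarrow> nat \<Rightarrow> 'a" where
  "q_pochhammer q n = (\<Prod>k = 1..n. 1 - q ^ k)"

lemma q_pochhammer_0 [simp]: "q_pochhammer q 0 = 1"
  by (simp add: q_pochhammer_def)

lemma q_pochhammer_Suc: "q_pochhammer q (Suc n) = q_pochhammer q n * (1 - q ^ Suc n)"
  by (simp add: q_pochhammer_def prod.cl_ivl_Suc)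

lemma of_real_q_pochhammer:
  "(of_real (q_pochhammer q n) :: 'a::real_field) = q_pochhammer (of_real q) n"
  by (simp add: q_pochhammer_def)

lemma one_minus_power_nonzero:
  fixes q :: "'a::real_normed_div_algebra"
  assumes "norm q < 1"
  shows "1 - q ^ Suc n \<noteq> 0"
proof -
  have "norm q ^ Suc n < 1"
    using assms by (subst power_less_one_iff) auto
  then have "norm (q ^ Suc n) < 1"
    by (simp only: norm_power)
  then show ?thesis by auto
qed

lemma q_pochhammer_nonzero:
  fixes q :: "'a::{real_normed_div_algebra, comm_ring_1}"
  assumes "norm q < 1"
  shows "q_pochhammer q n \<noteq> 0"
  using one_minus_power_nonzero[OF assms] by (induction n) (simp_all add: q_pochhammer_Suc)

definition small_q_exp_coeff :: "'a::field \<Rightarrow> 'a \<Rightarrow> nat \<Rightarrow> 'a" where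
  "small_q_exp_coeff q \<alpha> n = \<alpha> ^ n / q_pochhammer q n"

definition big_q_exp_coeff :: "'a::field \<Rightarrow> 'a \<Rightarrow> nat \<Rightarrow> 'a" where
  "big_q_exp_coeff q \<beta> n = \<beta> ^ n * q ^ (n choose 2) / q_pochhammer q n"

lemma small_q_exp_coeff_0 [simp]: "small_q_exp_coeff q \<alpha> 0 = 1"
  by (simp add: small_q_exp_coeff_def)

lemma big_q_exp_coeff_0 [simp]: "big_q_exp_coeff q \<beta> 0 = 1"
  by (simp add: big_q_exp_coeff_def numeral_2_eq_2)

lemma small_q_exp_coeff_Suc:
  "small_q_exp_coeff q \<alpha> (Suc n) = small_q_exp_coeff q \<alpha> n * (\<alpha> / (1 - q ^ Suc n))"
  by (simp add: small_q_exp_coeff_def q_pochhammer_Suc divide_inverse inverse_mult_distrib mult_ac)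

lemma big_q_exp_coeff_Suc:
  "big_q_exp_coeff q \<beta> (Suc n) = big_q_exp_coeff q \<beta> n * (\<beta> * q ^ n / (1 - q ^ Suc n))"
proof -
  have "Suc n choose 2 = (n choose 2) + n" by (simp add: numeral_2_eq_2)
  then show ?thesis
    by (simp add: big_q_exp_coeff_def q_pochhammer_Suc power_add divide_inverse
        inverse_mult_distrib mult_ac)
qed

lemma of_real_small_q_exp_coeff:
  "(of_real (small_q_exp_coeff q \<alpha> n) :: 'a::real_field) =
     small_q_exp_coeff (of_real q) (of_real \<alpha>) n"
  by (simp add: small_q_exp_coeff_def of_real_q_pochhammer)

lemma of_real_big_q_exp_coeff:
  "(of_real (big_q_exp_coeff q \<beta> n) :: 'a::real_field) =
     big_q_exp_coeff (of_real q) (of_real \<beta>) n"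
  by (simp add: big_q_exp_coeff_def of_real_q_pochhammer)

section \<open>Product expansions\<close>

lemma powser_q_difference:
  fixes c :: "nat \<Rightarrow> 'a::real_normed_field"
  assumes rec: "\<And>n. c (Suc n) * (1 - r ^ Suc n) = \<alpha> * \<gamma> ^ n * c n"
    and "summable (\<lambda>n. c n * w ^ n)" "summable (\<lambda>n. c n * (r * w) ^ n)"
    and "summable (\<lambda>n. c n * (\<gamma> * w) ^ n)"
  shows "(\<Sum>n. c n * w ^ n) - (\<Sum>n. c n * (r * w) ^ n) = \<alpha> * w * (\<Sum>n. c n * (\<gamma> * w) ^ n)"
proof -
  define g where "g n = c n * (1 - r ^ n) * w ^ n" for n
  have "(\<lambda>n. c n * w ^ n - c n * (r * w) ^ n) sums
          ((\<Sum>n. c n * w ^ n) - (\<Sum>n. c n * (r * w) ^ n))"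
    using assms(2,3) by (intro sums_diff summable_sums)
  moreover have "(\<lambda>n. c n * w ^ n - c n * (r * w) ^ n) = g"
    by (auto simp: g_def algebra_simps power_mult_distrib)
  ultimately have "g sums ((\<Sum>n. c n * w ^ n) - (\<Sum>n. c n * (r * w) ^ n))" by simp
  moreover have "g sums (\<alpha> * w * (\<Sum>n. c n * (\<gamma> * w) ^ n))"
  proof -
    have "g (Suc n) = \<alpha> * w * (c n * (\<gamma> * w) ^ n)" for n
      using rec[of n] by (simp add: g_def power_mult_distrib mult_ac)
    moreover have "(\<lambda>n. \<alpha> * w * (c n * (\<gamma> * w) ^ n)) sums (\<alpha> * w * (\<Sum>n. c n * (\<gamma> * w) ^ n))"
      using assms(4) by (intro sums_mult summable_sums)
    ultimately have "(\<lambda>n. g (Suc n)) sums (\<alpha> * w * (\<Sum>n. c n * (\<gamma> * w) ^ n))"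
      by simp
    then have "g sums (\<alpha> * w * (\<Sum>n. c n * (\<gamma> * w) ^ n) + g 0)"
      by (simp add: sums_Suc_iff)
    then show ?thesis by (simp add: g_def)
  qed
  ultimately show ?thesis by (rule sums_unique2)
qed

lemma has_prod_of_functional_equation:
  fixes f h :: "complex \<Rightarrow> complex"
  assumes eq: "\<And>k. f (r ^ k * z) = h (r ^ k * z) * f (r ^ Suc k * z)"
    and r: "norm r < 1" and cont: "isCont f 0" and f0: "f 0 = 1"
    and conv: "convergent_prod (\<lambda>k. h (r ^ k * z))"
  shows "(\<lambda>k. h (r ^ k * z)) has_prod f z"
proof -
  define H where "H = (\<lambda>k. h (r ^ k * z))"
  have iterate: "f z = (\<Prod>k<n. H k) * f (r ^ n * z)" for n
  proof (induction n)
    case (Suc n)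
    have "f z = (\<Prod>k<n. H k) * (H n * f (r ^ Suc n * z))"
      using Suc.IH unfolding eq[of n] H_def .
    then show ?case by (simp only: prod.lessThan_Suc mult.assoc)
  qed simp
  have "(\<lambda>n. r ^ n * z) \<longlonglongrightarrow> 0"
    by (intro tendsto_mult_left_zero LIMSEQ_power_zero r)
  then have lim: "(\<lambda>n. f (r ^ n * z)) \<longlonglongrightarrow> 1"
    using isCont_tendsto_compose[OF cont] f0 by force
  have "(\<lambda>n. \<Prod>k\<le>n. H k) \<longlonglongrightarrow> prodinf H"
    unfolding H_def by (rule convergent_prod_LIMSEQ[OF conv])
  then have "(\<lambda>n. \<Prod>k<Suc n. H k) \<longlonglongrightarrow> prodinf H"
    by (simp only: lessThan_Suc_atMost)
  then have "(\<lambda>n. \<Prod>k<n. H k) \<longlonglongrightarrow> prodinf H"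
    by (rule LIMSEQ_imp_Suc[where f = "\<lambda>n. \<Prod>k<n. H k"])
  then have "(\<lambda>n. (\<Prod>k<n. H k) * f (r ^ n * z)) \<longlonglongrightarrow> prodinf H * 1"
    by (intro tendsto_mult lim)
  then have "f z = prodinf H"
    unfolding iterate[symmetric] by (simp add: LIMSEQ_const_iff)
  with conv show ?thesis by (auto simp: H_def)
qed

lemma convergent_prod_one_plus_geometric:
  fixes q \<alpha> z :: complex
  assumes "norm q < 1"
  shows "convergent_prod (\<lambda>k. 1 + \<alpha> * q ^ k * z)"
proof -
  have "summable (\<lambda>k. norm \<alpha> * norm z * norm q ^ k)"
    using assms by (intro summable_mult summable_geometric) auto
  moreover have "norm ((1 + \<alpha> * q ^ k * z) - 1) = norm \<alpha> * norm z * norm q ^ k" for k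
    by (simp add: norm_mult norm_power)
  ultimately have "abs_convergent_prod (\<lambda>k. 1 + \<alpha> * q ^ k * z)"
    unfolding abs_convergent_prod_conv_summable by simp
  then show ?thesis
    by (rule abs_convergent_prod_imp_convergent_prod)
qed

lemma convergent_prod_small_q_exp_factors:
  fixes q \<alpha> z :: complex
  assumes "norm q < 1"
  shows "convergent_prod (\<lambda>k. 1 / (1 - \<alpha> * q ^ k * z))"
proof -
  have "convergent_prod (\<lambda>k. 1 - \<alpha> * q ^ k * z)"
    using convergent_prod_one_plus_geometric[OF assms, of "- \<alpha>" z] by simp
  then show ?thesis
    unfolding inverse_eq_divide[symmetric] by (rule convergent_prod_inverse)
qed

lemma small_q_exp_coeff_nonzero:
  fixes q \<alpha> :: "'a::real_normed_field"
  assumes "norm q < 1" "\<alpha> \<noteq> 0"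
  shows "small_q_exp_coeff q \<alpha> n \<noteq> 0"
  using q_pochhammer_nonzero[OF assms(1)] assms(2) by (simp add: small_q_exp_coeff_def)

lemma small_q_exp_coeff_recurrence:
  fixes q \<alpha> :: "'a::real_normed_field"
  assumes "norm q < 1"
  shows "small_q_exp_coeff q \<alpha> (Suc n) * (1 - q ^ Suc n) = \<alpha> * small_q_exp_coeff q \<alpha> n"
  using one_minus_power_nonzero[OF assms, of n] by (simp add: small_q_exp_coeff_Suc)

lemma big_q_exp_coeff_recurrence:
  fixes q \<beta> :: "'a::real_normed_field"
  assumes "norm q < 1"
  shows "big_q_exp_coeff q \<beta> (Suc n) * (1 - q ^ Suc n) = \<beta> * q ^ n * big_q_exp_coeff q \<beta> n"
  using one_minus_power_nonzero[OF assms, of n] by (simp add: big_q_exp_coeff_Suc)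

lemma conv_radius_small_q_exp:
  fixes q \<alpha> :: complex
  assumes q: "norm q < 1" and "\<alpha> \<noteq> 0"
  shows "conv_radius (small_q_exp_coeff q \<alpha>) = ereal (1 / norm \<alpha>)"
proof (rule conv_radius_ratio_limit_nonzero)
  let ?c = "small_q_exp_coeff q \<alpha>"
  have "(\<lambda>n. q ^ Suc n) \<longlonglongrightarrow> 0"
    by (rule LIMSEQ_Suc[OF LIMSEQ_power_zero[OF q]])
  then have "(\<lambda>n. norm (1 - q ^ Suc n) / norm \<alpha>) \<longlonglongrightarrow> norm (1 - 0 :: complex) / norm \<alpha>"
    using assms by (intro tendsto_intros) auto
  moreover have "norm (?c n) / norm (?c (Suc n)) = norm (1 - q ^ Suc n) / norm \<alpha>" for n
    using small_q_exp_coeff_nonzero[OF assms, of n] one_minus_power_nonzero[OF q, of n]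
    by (simp add: small_q_exp_coeff_Suc norm_mult norm_divide)
  ultimately show "(\<lambda>n. norm (?c n) / norm (?c (Suc n))) \<longlonglongrightarrow> 1 / norm \<alpha>"
    by simp
qed (use assms in auto)

lemma norm_geometric_orbit_le:
  fixes q w :: "'a::real_normed_div_algebra"
  assumes "norm q < 1"
  shows "norm (q ^ k * w) \<le> norm w"
proof -
  have "norm q ^ k \<le> 1"
    using assms by (simp add: power_le_one)
  then show ?thesis
    by (simp add: norm_mult norm_power mult_left_le_one_le)
qed

lemma small_q_exp_has_prod:
  fixes q \<alpha> z :: complex
  assumes q: "norm q < 1" and \<alpha>: "\<alpha> \<noteq> 0" and z: "norm z < 1 / norm \<alpha>"
  shows "(\<lambda>k. 1 / (1 - \<alpha> * q ^ k * z)) has_prod (\<Sum>n. small_q_exp_coeff q \<alpha> n * z ^ n)"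
proof -
  define c where "c = small_q_exp_coeff q \<alpha>"
  define f where "f = (\<lambda>w. \<Sum>n. c n * w ^ n)"
  define h where "h = (\<lambda>w. 1 / (1 - \<alpha> * w))"
  have summable: "summable (\<lambda>n. c n * w ^ n)" if "norm w < 1 / norm \<alpha>" for w
    using that by (intro summable_in_conv_radius) (simp add: c_def conv_radius_small_q_exp[OF q \<alpha>])
  have step: "f w = h w * f (q * w)" if w: "norm w < 1 / norm \<alpha>" for w
  proof -
    have qw: "norm (q * w) < 1 / norm \<alpha>"
      using norm_geometric_orbit_le[OF q, of 1 w] w by simp
    have "f w - f (q * w) = \<alpha> * w * f w"
      using powser_q_difference[of c q \<alpha> 1 w] small_q_exp_coeff_recurrence[OF q]
        summable[OF w] summable[OF qw]
      by (simp add: f_def c_def)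
    then have "f (q * w) = (1 - \<alpha> * w) * f w"
      by (simp add: algebra_simps)
    moreover have "norm (\<alpha> * w) < 1"
      using w \<alpha> by (simp add: norm_mult field_simps)
    then have "1 - \<alpha> * w \<noteq> 0"
      by auto
    ultimately show ?thesis
      by (simp add: h_def)
  qed
  have "(\<lambda>k. h (q ^ k * z)) has_prod f z"
  proof (rule has_prod_of_functional_equation[OF _ q])
    show "f (q ^ k * z) = h (q ^ k * z) * f (q ^ Suc k * z)" for k
      using step[of "q ^ k * z"] norm_geometric_orbit_le[OF q, of k z] z
      by (simp only: power_Suc mult.assoc)
    have "summable (\<lambda>n. c n * of_real (1 / (2 * norm \<alpha>)) ^ n)"
      using \<alpha> by (intro summable) (simp add: norm_divide field_simps)
    then show "isCont f 0"
      unfolding f_def by (rule isCont_powser) (use \<alpha> in simp)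
    show "f 0 = 1"
      by (simp add: f_def c_def powser_zero)
    show "convergent_prod (\<lambda>k. h (q ^ k * z))"
      using convergent_prod_small_q_exp_factors[OF q, of \<alpha> z] by (simp add: h_def mult.assoc)
  qed
  then show ?thesis
    by (simp add: h_def f_def c_def mult.assoc)
qed

lemma big_q_exp_summable:
  fixes q \<beta> z :: complex
  assumes q: "norm q < 1"
  shows "summable (\<lambda>n. big_q_exp_coeff q \<beta> n * z ^ n)"
proof -
  define \<rho> where "\<rho> n = \<beta> * q ^ n * z / (1 - q ^ Suc n)" for n
  have "(\<lambda>n. q ^ Suc n) \<longlonglongrightarrow> 0"
    by (rule LIMSEQ_Suc[OF LIMSEQ_power_zero[OF q]])
  then have "\<rho> \<longlonglongrightarrow> \<beta> * 0 * z / (1 - 0)"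
    unfolding \<rho>_def by (intro tendsto_intros LIMSEQ_power_zero q) simp_all
  then have "eventually (\<lambda>n. norm (\<rho> n) < 1 / 2) sequentially"
    by (intro order_tendstoD(2)[OF tendsto_norm_zero]) simp_all
  then obtain N where N: "\<And>n. n \<ge> N \<Longrightarrow> norm (\<rho> n) < 1 / 2"
    by (auto simp: eventually_sequentially)
  show ?thesis
  proof (rule summable_ratio_test[of "1 / 2" N])
    fix n assume "n \<ge> N"
    have "norm (big_q_exp_coeff q \<beta> (Suc n) * z ^ Suc n)
        = norm (\<rho> n) * norm (big_q_exp_coeff q \<beta> n * z ^ n)"
      by (simp add: big_q_exp_coeff_Suc \<rho>_def norm_mult norm_divide norm_power mult_ac)
    also have "\<dots> \<le> 1 / 2 * norm (big_q_exp_coeff q \<beta> n * z ^ n)"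
      using N[OF \<open>n \<ge> N\<close>] by (intro mult_right_mono) auto
    finally show "norm (big_q_exp_coeff q \<beta> (Suc n) * z ^ Suc n)
        \<le> 1 / 2 * norm (big_q_exp_coeff q \<beta> n * z ^ n)" .
  qed simp
qed

lemma big_q_exp_has_prod:
  fixes q \<beta> z :: complex
  assumes q: "norm q < 1"
  shows "(\<lambda>k. 1 + \<beta> * q ^ k * z) has_prod (\<Sum>n. big_q_exp_coeff q \<beta> n * z ^ n)"
proof -
  define c where "c = big_q_exp_coeff q \<beta>"
  define f where "f = (\<lambda>w. \<Sum>n. c n * w ^ n)"
  define h where "h = (\<lambda>w. 1 + \<beta> * w)"
  have summable: "summable (\<lambda>n. c n * w ^ n)" for w
    unfolding c_def by (rule big_q_exp_summable[OF q])
  have step: "f w = h w * f (q * w)" for w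
  proof -
    have "f w - f (q * w) = \<beta> * w * f (q * w)"
      unfolding f_def c_def
      by (rule powser_q_difference[OF big_q_exp_coeff_recurrence[OF q]])
         (use summable in \<open>simp_all add: c_def\<close>)
    then show ?thesis
      by (simp add: h_def algebra_simps)
  qed
  have "(\<lambda>k. h (q ^ k * z)) has_prod f z"
  proof (rule has_prod_of_functional_equation[OF _ q])
    show "f (q ^ k * z) = h (q ^ k * z) * f (q ^ Suc k * z)" for k
      using step[of "q ^ k * z"] by (simp only: power_Suc mult.assoc)
    show "isCont f 0"
      unfolding f_def by (rule isCont_powser_converges_everywhere[OF summable])
    show "f 0 = 1"
      by (simp add: f_def c_def powser_zero)
    show "convergent_prod (\<lambda>k. h (q ^ k * z))"
      using convergent_prod_one_plus_geometric[OF q, of \<beta> z] by (simp add: h_def mult.assoc)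
  qed
  then show ?thesis
    by (simp add: h_def f_def c_def mult.assoc)
qed

lemma small_q_exp_product_meromorphic:
  fixes q \<alpha> :: complex
  assumes q: "norm q < 1" and \<alpha>: "\<alpha> \<noteq> 0"
  shows "(\<lambda>z. \<Prod>k. 1 / (1 - \<alpha> * q ^ k * z)) meromorphic_on UNIV"
proof -
  define F where "F = (\<lambda>z. \<Prod>k. 1 / (1 - \<alpha> * q ^ k * z))"
  define e where "e = Abs_fps (small_q_exp_coeff q \<alpha>)"
  txt \<open>The tail of the product beyond N is e_q at q^N z, analytic where q^N z is small.\<close>
  have split: "F z = (\<Prod>k<N. 1 / (1 - \<alpha> * q ^ k * z)) * eval_fps e (q ^ N * z)"
    if "norm (q ^ N * z) < 1 / norm \<alpha>" for N z
  proof -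
    have "(\<lambda>k. 1 / (1 - \<alpha> * q ^ k * z)) has_prod
            ((\<Prod>k<N. 1 / (1 - \<alpha> * q ^ k * z)) * (\<Prod>k. 1 / (1 - \<alpha> * q ^ (k + N) * z)))"
      by (rule has_prod_ignore_initial_segment'[OF convergent_prod_small_q_exp_factors[OF q]])
    moreover have "(\<lambda>k. 1 / (1 - \<alpha> * q ^ (k + N) * z)) has_prod eval_fps e (q ^ N * z)"
      using small_q_exp_has_prod[OF q \<alpha> that]
      by (simp add: e_def eval_fps_def power_add mult_ac)
    ultimately show ?thesis
      unfolding F_def by (metis has_prod_unique)
  qed
  have radius: "fps_conv_radius e = ereal (1 / norm \<alpha>)"
    by (simp add: e_def fps_conv_radius_def conv_radius_small_q_exp[OF q \<alpha>])
  have "F meromorphic_on {z0}" for z0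
  proof -
    have "(\<lambda>N. q ^ N * z0) \<longlonglongrightarrow> 0"
      by (intro tendsto_mult_left_zero LIMSEQ_power_zero q)
    then have "eventually (\<lambda>N. norm (q ^ N * z0) < 1 / norm \<alpha>) sequentially"
      using \<alpha> by (intro order_tendstoD(2)[OF tendsto_norm_zero]) simp_all
    then obtain N where N: "norm (q ^ N * z0) < 1 / norm \<alpha>"
      by (auto simp: eventually_sequentially)
    define G where "G = (\<lambda>z. (\<Prod>k<N. 1 / (1 - \<alpha> * q ^ k * z)) * eval_fps e (q ^ N * z))"
    have "(\<lambda>z. eval_fps e (q ^ N * z)) meromorphic_on {z0}"
      using N radius by (intro meromorphic_on_eval_fps analytic_intros) auto
    moreover have "(\<lambda>z. \<Prod>k<N. 1 / (1 - \<alpha> * q ^ k * z)) meromorphic_on {z0}"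
      by (intro meromorphic_intros)
    ultimately have "G meromorphic_on {z0}"
      unfolding G_def by (intro meromorphic_on_mult)
    moreover have "((\<lambda>z. norm (q ^ N * z)) \<longlongrightarrow> norm (q ^ N * z0)) (at z0)"
      by (intro tendsto_intros)
    then have "eventually (\<lambda>z. norm (q ^ N * z) < 1 / norm \<alpha>) (at z0)"
      using N by (rule order_tendstoD(2))
    then have "eventually (\<lambda>z. F z = G z) (at z0)"
      by (rule eventually_mono) (simp add: split G_def)
    ultimately show ?thesis
      using meromorphic_on_cong[of "{z0}" F G] by auto
  qed
  then have "F meromorphic_on UNIV"
    using meromorphic_on_meromorphic_at by blast
  then show ?thesis
    by (simp only: F_def)
qed

section \<open>Exp_{s,t} as a q-exponential\<close>

lemma phi_plus_phi': "phi s t + phi' s t = s"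
  by (simp add: phi_def phi'_def field_simps)

lemma phi_minus_phi': "phi s t - phi' s t = sqrt (s\<^sup>2 + 4 * t)"
  by (simp add: phi_def phi'_def field_simps)

lemma phi_times_phi':
  assumes "s\<^sup>2 + 4 * t \<ge> 0"
  shows "phi s t * phi' s t = - t"
proof -
  have "sqrt (s\<^sup>2 + 4 * t) ^ 2 = s\<^sup>2 + 4 * t"
    using assms by simp
  then show ?thesis
    by (simp add: phi_def phi'_def field_simps power2_eq_square)
qed

lemma gfib_binet:
  fixes a b s t :: real
  assumes "a + b = s" "a * b = - t" "a \<noteq> b"
  shows "gfib s t n = (a ^ n - b ^ n) / (a - b)"
  using assms
proof (induction s t n rule: gfib.induct)
  case (3 s t n)
  have st: "s = a + b" "t = - (a * b)"
    using "3.prems" by auto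
  have "gfib s t (Suc (Suc n)) = (a + b) * gfib s t (Suc n) - a * b * gfib s t n"
    by (simp add: st)
  also have "\<dots> = (a + b) * ((a ^ Suc n - b ^ Suc n) / (a - b)) - a * b * ((a ^ n - b ^ n) / (a - b))"
    using "3.IH"[OF "3.prems"] by simp
  also have "\<dots> = ((a + b) * (a ^ Suc n - b ^ Suc n) - a * b * (a ^ n - b ^ n)) / (a - b)"
    by (simp only: times_divide_eq_right diff_divide_distrib[symmetric])
  also have "(a + b) * (a ^ Suc n - b ^ Suc n) - a * b * (a ^ n - b ^ n)
      = a ^ Suc (Suc n) - b ^ Suc (Suc n)"
    by (simp add: algebra_simps)
  finally show ?case .
qed simp_all

lemma gfib_eq_phi:
  assumes "s\<^sup>2 + 4 * t > 0"
  shows "gfib s t n = (phi s t ^ n - phi' s t ^ n) / (phi s t - phi' s t)"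
  using assms phi_minus_phi'[of s t]
  by (intro gfib_binet phi_plus_phi' phi_times_phi') auto

lemma fibotorial_Suc: "fibotorial s t (Suc n) = fibotorial s t n * gfib s t (Suc n)"
  by (simp add: fibotorial_def prod.cl_ivl_Suc)

lemma power_choose_div_fibotorial_Suc:
  "x ^ (Suc n choose 2) / fibotorial s t (Suc n)
     = x ^ (n choose 2) / fibotorial s t n * (x ^ n / gfib s t (Suc n))"
proof -
  have "Suc n choose 2 = (n choose 2) + n"
    by (simp add: numeral_2_eq_2)
  then show ?thesis
    by (simp add: fibotorial_Suc power_add times_divide_times_eq)
qed

lemma power_choose_div_fibotorial_0: "x ^ (0 choose 2) / fibotorial s t 0 = 1"
  by (simp add: fibotorial_def numeral_2_eq_2)

lemma phi_power_div_gfib: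
  assumes "s\<^sup>2 + 4 * t > 0"
  shows "phi s t ^ n / gfib s t (Suc n)
           = (phi s t - phi' s t) * phi s t ^ n / (phi s t ^ Suc n - phi' s t ^ Suc n)"
  using gfib_eq_phi[OF assms] by (simp add: divide_divide_eq_right mult.commute)

lemma Exp_coeff_eq_small_q_exp_coeff:
  assumes "s\<^sup>2 + 4 * t > 0" "phi s t \<noteq> 0"
  shows "Exp_coeff s t n = small_q_exp_coeff (of_real (phi' s t / phi s t))
                             (of_real ((phi s t - phi' s t) / phi s t)) n"
proof -
  define a b where "a = phi s t" and "b = phi' s t"
  have "a \<noteq> 0"
    using assms(2) by (simp add: a_def)
  have step: "a ^ n / gfib s t (Suc n) = (a - b) / a / (1 - (b / a) ^ Suc n)" for n
  proof -
    have "1 - (b / a) ^ Suc n = (a ^ Suc n - b ^ Suc n) / a ^ Suc n"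
      using \<open>a \<noteq> 0\<close> by (simp add: power_divide diff_divide_distrib)
    then have "(a - b) / a / (1 - (b / a) ^ Suc n) = (a - b) / a * a ^ Suc n / (a ^ Suc n - b ^ Suc n)"
      by (simp only: divide_divide_eq_right)
    also have "(a - b) / a * a ^ Suc n = (a - b) * a ^ n"
      using \<open>a \<noteq> 0\<close> by simp
    finally show ?thesis
      using phi_power_div_gfib[OF assms(1)] by (simp add: a_def b_def)
  qed
  have "a ^ (n choose 2) / fibotorial s t n = small_q_exp_coeff (b / a) ((a - b) / a) n"
  proof (induction n)
    case (Suc n)
    have "a ^ (Suc n choose 2) / fibotorial s t (Suc n)
        = a ^ (n choose 2) / fibotorial s t n * (a ^ n / gfib s t (Suc n))"
      by (rule power_choose_div_fibotorial_Suc)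
    also have "\<dots> = small_q_exp_coeff (b / a) ((a - b) / a) (Suc n)"
      by (simp only: Suc.IH step small_q_exp_coeff_Suc)
    finally show ?case .
  qed (simp add: power_choose_div_fibotorial_0)
  then show ?thesis
    by (simp only: Exp_coeff_def a_def b_def of_real_small_q_exp_coeff[symmetric])
qed

lemma Exp_coeff_eq_big_q_exp_coeff:
  assumes "s\<^sup>2 + 4 * t > 0" "phi' s t \<noteq> 0"
  shows "Exp_coeff s t n = big_q_exp_coeff (of_real (phi s t / phi' s t))
                             (of_real ((phi' s t - phi s t) / phi' s t)) n"
proof -
  define a b where "a = phi s t" and "b = phi' s t"
  have "b \<noteq> 0"
    using assms(2) by (simp add: b_def)
  have step: "a ^ n / gfib s t (Suc n) = (b - a) / b * (a / b) ^ n / (1 - (a / b) ^ Suc n)" for n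
  proof -
    have "1 - (a / b) ^ Suc n = (b ^ Suc n - a ^ Suc n) / b ^ Suc n"
      using \<open>b \<noteq> 0\<close> by (simp add: power_divide diff_divide_distrib)
    then have "(b - a) / b * (a / b) ^ n / (1 - (a / b) ^ Suc n)
        = (b - a) / b * (a / b) ^ n * b ^ Suc n / (b ^ Suc n - a ^ Suc n)"
      by (simp only: divide_divide_eq_right)
    also have "(b - a) / b * (a / b) ^ n * b ^ Suc n = (b - a) * a ^ n"
      using \<open>b \<noteq> 0\<close> by (simp add: power_divide)
    also have "(b - a) * a ^ n / (b ^ Suc n - a ^ Suc n) = (a - b) * a ^ n / (a ^ Suc n - b ^ Suc n)"
      by (metis minus_diff_eq minus_divide_divide mult_minus_left)
    finally show ?thesis
      using phi_power_div_gfib[OF assms(1)] by (simp add: a_def b_def)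
  qed
  have "a ^ (n choose 2) / fibotorial s t n = big_q_exp_coeff (a / b) ((b - a) / b) n"
  proof (induction n)
    case (Suc n)
    have "a ^ (Suc n choose 2) / fibotorial s t (Suc n)
        = a ^ (n choose 2) / fibotorial s t n * (a ^ n / gfib s t (Suc n))"
      by (rule power_choose_div_fibotorial_Suc)
    also have "\<dots> = big_q_exp_coeff (a / b) ((b - a) / b) (Suc n)"
      by (simp only: Suc.IH step big_q_exp_coeff_Suc)
    finally show ?case .
  qed (simp add: power_choose_div_fibotorial_0)
  then show ?thesis
    by (simp only: Exp_coeff_def a_def b_def of_real_big_q_exp_coeff[symmetric])
qed

lemma Exp_st_product_small_ratio:
  fixes s t :: real
  assumes disc: "s\<^sup>2 + 4 * t > 0" and lt: "\<bar>phi' s t\<bar> < \<bar>phi s t\<bar>"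
  defines "fac \<equiv> \<lambda>(k::nat) (z::complex). complex_of_real (phi s t ^ (k + 1)) /
             (complex_of_real (phi s t ^ (k + 1))
              - complex_of_real ((phi s t - phi' s t) * phi' s t ^ k) * z)"
  shows "conv_radius (Exp_coeff s t) = ereal (\<bar>phi s t\<bar> / (phi s t - phi' s t))"
    and "ereal (cmod z) < conv_radius (Exp_coeff s t) \<Longrightarrow> (\<lambda>k. fac k z) has_prod Exp_st s t z"
    and "convergent_prod (\<lambda>k. fac k z)"
    and "(\<lambda>z. \<Prod>k. fac k z) meromorphic_on UNIV"
proof -
  define a b where "a = phi s t" and "b = phi' s t"
  define \<alpha> Q where "\<alpha> = complex_of_real ((a - b) / a)" and "Q = complex_of_real (b / a)"
  have "a \<noteq> 0"
    using lt by (auto simp: a_def)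
  have "a - b > 0"
    using disc by (simp add: a_def b_def phi_minus_phi')
  have Q: "norm Q < 1"
    unfolding Q_def norm_of_real abs_divide using lt \<open>a \<noteq> 0\<close> by (simp add: a_def b_def)
  have \<alpha>: "\<alpha> \<noteq> 0"
    using \<open>a \<noteq> 0\<close> \<open>a - b > 0\<close> by (simp add: \<alpha>_def)
  have radius: "1 / norm \<alpha> = \<bar>a\<bar> / (a - b)"
    unfolding \<alpha>_def norm_of_real abs_divide using \<open>a - b > 0\<close> by simp
  have coeff: "Exp_coeff s t = small_q_exp_coeff Q \<alpha>"
    using Exp_coeff_eq_small_q_exp_coeff[OF disc] \<open>a \<noteq> 0\<close> by (auto simp: a_def b_def Q_def \<alpha>_def)
  have fac: "fac = (\<lambda>k z. 1 / (1 - \<alpha> * Q ^ k * z))"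
  proof (intro ext)
    fix k z
    define A X where "A = complex_of_real (a ^ (k + 1))"
      and "X = complex_of_real ((a - b) * b ^ k) * z"
    have "A \<noteq> 0"
      using \<open>a \<noteq> 0\<close> by (simp add: A_def)
    have "\<alpha> * Q ^ k * z = X / A"
      using \<open>a \<noteq> 0\<close> by (simp add: \<alpha>_def Q_def A_def X_def power_divide field_simps)
    moreover have "1 - X / A = (A - X) / A"
      using \<open>A \<noteq> 0\<close> by (simp add: diff_divide_distrib)
    ultimately have "1 / (1 - \<alpha> * Q ^ k * z) = A / (A - X)"
      by (simp add: divide_divide_eq_right)
    then show "fac k z = 1 / (1 - \<alpha> * Q ^ k * z)"
      by (simp add: fac_def A_def X_def a_def b_def)
  qed
  show conv_radius: "conv_radius (Exp_coeff s t) = ereal (\<bar>phi s t\<bar> / (phi s t - phi' s t))"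
    using conv_radius_small_q_exp[OF Q \<alpha>] radius by (simp add: coeff a_def b_def)
  show "(\<lambda>k. fac k z) has_prod Exp_st s t z" if "ereal (cmod z) < conv_radius (Exp_coeff s t)"
    using small_q_exp_has_prod[OF Q \<alpha>, of z] that conv_radius radius
    by (simp add: fac Exp_st_def coeff a_def b_def)
  show "convergent_prod (\<lambda>k. fac k z)"
    unfolding fac by (rule convergent_prod_small_q_exp_factors[OF Q])
  show "(\<lambda>z. \<Prod>k. fac k z) meromorphic_on UNIV"
    unfolding fac by (rule small_q_exp_product_meromorphic[OF Q \<alpha>])
qed

lemma Exp_st_product_large_ratio:
  fixes s t :: real
  assumes disc: "s\<^sup>2 + 4 * t > 0" and lt: "\<bar>phi s t\<bar> < \<bar>phi' s t\<bar>"
  shows "(\<lambda>k. 1 - complex_of_real ((phi s t - phi' s t) * (phi s t ^ k / phi' s t ^ (k + 1))) * z)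
           has_prod Exp_st s t z"
proof -
  define a b where "a = phi s t" and "b = phi' s t"
  define \<beta> P where "\<beta> = complex_of_real ((b - a) / b)" and "P = complex_of_real (a / b)"
  have "b \<noteq> 0"
    using lt by (auto simp: b_def)
  have P: "norm P < 1"
    unfolding P_def norm_of_real abs_divide using lt \<open>b \<noteq> 0\<close> by (simp add: a_def b_def)
  have coeff: "Exp_coeff s t = big_q_exp_coeff P \<beta>"
    using Exp_coeff_eq_big_q_exp_coeff[OF disc] \<open>b \<noteq> 0\<close> by (auto simp: a_def b_def P_def \<beta>_def)
  have "\<beta> * P ^ k = - complex_of_real ((a - b) * (a ^ k / b ^ (k + 1)))" for k
    using \<open>b \<noteq> 0\<close> by (simp add: \<beta>_def P_def power_divide field_simps)
  then have factors: "(\<lambda>k. 1 - complex_of_real ((a - b) * (a ^ k / b ^ (k + 1))) * z)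
      = (\<lambda>k. 1 + \<beta> * P ^ k * z)"
    by simp
  show ?thesis
    unfolding a_def[symmetric] b_def[symmetric] factors Exp_st_def coeff
    by (rule big_q_exp_has_prod[OF P])
qed

theorem mainTheorem9:
  fixes s t :: real
  assumes "s \<noteq> 0" and "t \<noteq> 0" and "s\<^sup>2 + 4 * t > 0"
  defines "q \<equiv> phi' s t / phi s t"
  shows
    "(\<bar>q\<bar> < 1 \<longrightarrow>
       (let fac = (\<lambda>(k::nat) (z::complex).
                    complex_of_real (phi s t ^ (k + 1)) /
                    (complex_of_real (phi s t ^ (k + 1))
                     - complex_of_real ((phi s t - phi' s t) * phi' s t ^ k) * z));
            F = (\<lambda>z. \<Prod>k. fac k z)
        in conv_radius (Exp_coeff s t) > 0
         \<and> (\<forall>z. ereal (cmod z) < conv_radius (Exp_coeff s t) \<longrightarrow>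
                (\<lambda>k. fac k z) has_prod Exp_st s t z)
         \<and> (\<forall>z. (\<forall>k. complex_of_real (phi s t ^ (k + 1))
                     - complex_of_real ((phi s t - phi' s t) * phi' s t ^ k) * z \<noteq> 0) \<longrightarrow>
                (\<lambda>k. fac k z) has_prod F z)
         \<and> F meromorphic_on UNIV))
   \<and> (\<bar>q\<bar> > 1 \<longrightarrow>
       (\<forall>z::complex. (\<lambda>k::nat. 1 - complex_of_real ((phi s t - phi' s t) *
                        (phi s t ^ k / phi' s t ^ (k + 1))) * z) has_prod Exp_st s t z))"
proof -
  have "phi s t \<noteq> 0"
    using phi_times_phi'[of s t] assms(2,3) by auto
  then have q: "\<bar>q\<bar> = \<bar>phi' s t\<bar> / \<bar>phi s t\<bar>"
    by (simp add: q_def abs_divide)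
  have "\<bar>q\<bar> < 1 \<Longrightarrow> \<bar>phi' s t\<bar> < \<bar>phi s t\<bar>" and "\<bar>q\<bar> > 1 \<Longrightarrow> \<bar>phi s t\<bar> < \<bar>phi' s t\<bar>"
    using \<open>phi s t \<noteq> 0\<close> by (simp_all add: q divide_less_eq less_divide_eq)
  moreover have "\<bar>phi s t\<bar> / (phi s t - phi' s t) > 0"
    using assms(3) \<open>phi s t \<noteq> 0\<close> by (simp add: phi_minus_phi')
  ultimately show ?thesis
    unfolding Let_def
    using Exp_st_product_small_ratio[OF assms(3)] Exp_st_product_large_ratio[OF assms(3)]
    by (auto intro: convergent_prod_has_prod)
qed

end
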